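(* Let $N\ge 1$, $m\ge1$ and $m_1,\dots,m_N\ge 1$ be integers. For $t=1,\dots,N$ let $D^{(t)}\in\mathbb{R}^{m\times m_t}$ be given matrices, and let $\bm{a}^{(t)}\in\mathbb{R}^{m_t}$ satisfy $\bm{a}^{(t)}\ge 0$ and $\bm{e}_{m_t}^\top\bm{a}^{(t)}=1$. Consider the primal problem $$(\mathrm{P})\quad \min_{\bm{w}\in\mathbb{R}^m,\,\Pi^{(t)}\in\mathbb{R}^{m\times m_t}}\ \delta_{\Delta_m}(\bm{w})+\sum_{t=1}^N\delta^t_+(\Pi^{(t)})+\sum_{t=1}^N\langle D^{(t)},\Pi^{(t)}\rangle\quad\text{s.t.}\quad \Pi^{(t)}\bm{e}_{m_t}=\bm{w},\ (\Pi^{(t)})^\top\bm{e}_m=\bm{a}^{(t)},\ t=1,\dots,N,$$ and the dual-type problem $$(\mathrm{D})\quad \min_{\bm{u}\in\mathbb{R}^m,\,V^{(t)}\in\mathbb{R}^{m\times m_t},\,\bm{y}^{(t)}\in\mathbb{R}^m,\,\bm{z}^{(t)}\in\mathbb{R}^{m_t}}\ \delta^*_{\Delta_m}(\bm{u})+\sum_{t=1}^N\delta^t_+(V^{(t)})+\sum_{t=1}^N\langle\bm{z}^{(t)},\bm{a}^{(t)}\rangle$$ $$\text{s.t.}\quad \sum_{t=1}^N\bm{y}^{(t)}-\bm{u}=0,\qquad V^{(t)}-D^{(t)}-\bm{y}^{(t)}\bm{e}_{m_t}^\top-\bm{e}_m(\bm{z}^{(t)})^\top=0,\ t=1,\dots,N.$$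 Consider the KKT system for (P) in the unknowns $(\bm{w},\{\Pi^{(t)}\},\{\bm{y}^{(t)}\},\{\bm{z}^{(t)}\})$: $$0\in\partial\delta_{\Delta_m}(\bm{w})-\sum_{t=1}^N\bm{y}^{(t)},\quad 0\in\partial\delta^t_+(\Pi^{(t)})+D^{(t)}+\bm{y}^{(t)}\bm{e}_{m_t}^\top+\bm{e}_m(\bm{z}^{(t)})^\top,\quad \Pi^{(t)}\bm{e}_{m_t}=\bm{w},\quad (\Pi^{(t)})^\top\bm{e}_m=\bm{a}^{(t)}\quad(\forall t),$$ and the KKT system for (D) in the unknowns $(\bm{u},\{V^{(t)}\},\{\bm{y}^{(t)}\},\{\bm{z}^{(t)}\},\bm{\lambda},\{\Lambda^{(t)}\})$ with $\bm{\lambda}\in\mathbb{R}^m$, $\Lambda^{(t)}\in\mathbb{R}^{m\times m_t}$: $$0\in\partial\delta^*_{\Delta_m}(\bm{u})-\bm{\lambda},\quad 0\in\partial\delta^t_+(V^{(t)})+\Lambda^{(t)},\quad \Lambda^{(t)}\bm{e}_{m_t}=\bm{\lambda},\quad (\Lambda^{(t)})^\top\bm{e}_m=\bm{a}^{(t)},$$ $$\sum_{t=1}^N\bm{y}^{(t)}-\bm{u}=0,\quad V^{(t)}-D^{(t)}-\bm{y}^{(t)}\bm{e}_{m_t}^\top-\bm{e}_m(\bm{z}^{(t)})^\top=0\quad(\forall t).$$ Then: (i) (P) has an optimal solution and the solution set of the KKT system for (P) is nonempty; (ii) (D) has an optimal solution and the solution set of the KKT system for (D) is nonempty; (iii) if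 $(\bm{u}^*,\{V^{(t),*}\},\{\bm{y}^{(t),*}\},\{\bm{z}^{(t),*}\},\bm{\lambda}^*,\{\Lambda^{(t),*}\})$ solves the KKT system for (D), then $(\bm{u}^*,\{V^{(t),*}\},\{\bm{y}^{(t),*}\},\{\bm{z}^{(t),*}\})$ is an optimal solution of (D) and $(\bm{\lambda}^*,\{\Lambda^{(t),*}\})$ (as $(\bm{w},\{\Pi^{(t)}\})$) is an optimal solution of (P).
   Context: $\bm{e}_k$ denotes the all-ones vector in $\mathbb{R}^k$. $\Delta_m=\{\bm{w}\in\mathbb{R}^m:\bm{e}_m^\top\bm{w}=1,\ \bm{w}\ge0\}$ is the unit simplex; $\delta_{\Delta_m}$ is its indicator function (0 on $\Delta_m$, $+\infty$ outside) and $\delta^*_{\Delta_m}$ its convex conjugate, $\delta^*_{\Delta_m}(\bm{u})=\max_i u_i$. $\delta^t_+$ is the indicator function of the nonnegative orthant $\{\Pi\in\mathbb{R}^{m\times m_t}:\Pi\ge0\}$ (entrywise). $\partial$ denotes the convex subdifferential and $\langle X,Y\rangle=\sum_{ij}x_{ij}y_{ij}$. *)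

theory Defs
  imports Complex_Main "HOL-Library.Extended_Real"
begin

text \<open>Vectors in R^m are represented as functions nat => real vanishing outside {..<m};
  m x n matrices as functions nat => nat => real vanishing outside {..<m} x {..<n}.
  Indices are 0-based: t ranges over {..<N}.\<close>

definition vecs :: "nat \<Rightarrow> (nat \<Rightarrow> real) set" where
  "vecs m = {v. \<forall>i. m \<le> i \<longrightarrow> v i = 0}"

definition mats :: "nat \<Rightarrow> nat \<Rightarrow> (nat \<Rightarrow> nat \<Rightarrow> real) set" where
  "mats m n = {A. \<forall>i j. (m \<le> i \<or> n \<le> j) \<longrightarrow> A i j = 0}"

definition vinner :: "nat \<Rightarrow> (nat \<Rightarrow> real) \<Rightarrow> (nat \<Rightarrow> real) \<Rightarrow> real" where
  "vinner m u v = (\<Sum>i<m. u i * v i)"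

definition minner :: "nat \<Rightarrow> nat \<Rightarrow> (nat \<Rightarrow> nat \<Rightarrow> real) \<Rightarrow> (nat \<Rightarrow> nat \<Rightarrow> real) \<Rightarrow> real" where
  "minner m n A B = (\<Sum>i<m. \<Sum>j<n. A i j * B i j)"

definition vsubdiff :: "nat \<Rightarrow> ((nat \<Rightarrow> real) \<Rightarrow> ereal) \<Rightarrow> (nat \<Rightarrow> real) \<Rightarrow> (nat \<Rightarrow> real) set" where
  "vsubdiff m f x = {g \<in> vecs m. x \<in> vecs m \<and> f x \<noteq> \<infinity> \<and> f x \<noteq> -\<infinity> \<and>
      (\<forall>y\<in>vecs m. f x + ereal (vinner m g (\<lambda>i. y i - x i)) \<le> f y)}"

definition msubdiff :: "nat \<Rightarrow> nat \<Rightarrow> ((nat \<Rightarrow> nat \<Rightarrow> real) \<Rightarrow> ereal) \<Rightarrow> (nat \<Rightarrow> nat \<Rightarrow> real)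
      \<Rightarrow> (nat \<Rightarrow> nat \<Rightarrow> real) set" where
  "msubdiff m n f X = {G \<in> mats m n. X \<in> mats m n \<and> f X \<noteq> \<infinity> \<and> f X \<noteq> -\<infinity> \<and>
      (\<forall>Y\<in>mats m n. f X + ereal (minner m n G (\<lambda>i j. Y i j - X i j)) \<le> f Y)}"

definition vconj :: "nat \<Rightarrow> ((nat \<Rightarrow> real) \<Rightarrow> ereal) \<Rightarrow> (nat \<Rightarrow> real) \<Rightarrow> ereal" where
  "vconj m f u = (SUP x\<in>vecs m. ereal (vinner m u x) - f x)"

definition simplex :: "nat \<Rightarrow> (nat \<Rightarrow> real) set" where
  "simplex m = {w \<in> vecs m. (\<Sum>i<m. w i) = 1 \<and> (\<forall>i<m. 0 \<le> w i)}"

definition delta_simplex :: "nat \<Rightarrow> (nat \<Rightarrow> real) \<Rightarrow> ereal" where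
  "delta_simplex m w = (if w \<in> simplex m then 0 else \<infinity>)"

definition nonneg_mats :: "nat \<Rightarrow> nat \<Rightarrow> (nat \<Rightarrow> nat \<Rightarrow> real) set" where
  "nonneg_mats m n = {X \<in> mats m n. \<forall>i<m. \<forall>j<n. 0 \<le> X i j}"

definition delta_plus :: "nat \<Rightarrow> nat \<Rightarrow> (nat \<Rightarrow> nat \<Rightarrow> real) \<Rightarrow> ereal" where
  "delta_plus m n X = (if X \<in> nonneg_mats m n then 0 else \<infinity>)"

definition P_feasible where
  "P_feasible N m mt a w Pi \<longleftrightarrow> w \<in> vecs m \<and>
     (\<forall>t<N. Pi t \<in> mats m (mt t) \<and>
        (\<forall>i<m. (\<Sum>j<mt t. Pi t i j) = w i) \<and>
        (\<forall>j<mt t. (\<Sum>i<m. Pi t i j) = a t j))"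

definition P_obj :: "nat \<Rightarrow> nat \<Rightarrow> (nat \<Rightarrow> nat) \<Rightarrow> (nat \<Rightarrow> nat \<Rightarrow> nat \<Rightarrow> real)
     \<Rightarrow> (nat \<Rightarrow> real) \<Rightarrow> (nat \<Rightarrow> nat \<Rightarrow> nat \<Rightarrow> real) \<Rightarrow> ereal" where
  "P_obj N m mt D w Pi = delta_simplex m w + (\<Sum>t<N. delta_plus m (mt t) (Pi t))
      + ereal (\<Sum>t<N. minner m (mt t) (D t) (Pi t))"

definition P_optimal where
  "P_optimal N m mt D a w Pi \<longleftrightarrow> P_feasible N m mt a w Pi \<and>
     (\<forall>w' Pi'. P_feasible N m mt a w' Pi' \<longrightarrow> P_obj N m mt D w Pi \<le> P_obj N m mt D w' Pi')"

definition D_feasible where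
  "D_feasible N m mt D u V y z \<longleftrightarrow> u \<in> vecs m \<and>
     (\<forall>t<N. V t \<in> mats m (mt t) \<and> y t \<in> vecs m \<and> z t \<in> vecs (mt t)) \<and>
     (\<forall>i<m. (\<Sum>t<N. y t i) - u i = 0) \<and>
     (\<forall>t<N. \<forall>i<m. \<forall>j<mt t. V t i j - D t i j - y t i - z t j = 0)"

definition D_obj :: "nat \<Rightarrow> nat \<Rightarrow> (nat \<Rightarrow> nat) \<Rightarrow> (nat \<Rightarrow> nat \<Rightarrow> real) \<Rightarrow> (nat \<Rightarrow> real)
     \<Rightarrow> (nat \<Rightarrow> nat \<Rightarrow> nat \<Rightarrow> real) \<Rightarrow> (nat \<Rightarrow> nat \<Rightarrow> real) \<Rightarrow> ereal" where
  "D_obj N m mt a u V z = vconj m (delta_simplex m) u + (\<Sum>t<N. delta_plus m (mt t) (V t))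
      + ereal (\<Sum>t<N. vinner (mt t) (z t) (a t))"

definition D_optimal where
  "D_optimal N m mt D a u V y z \<longleftrightarrow> D_feasible N m mt D u V y z \<and>
     (\<forall>u' V' y' z'. D_feasible N m mt D u' V' y' z' \<longrightarrow>
        D_obj N m mt a u V z \<le> D_obj N m mt a u' V' z')"

definition KKT_P where
  "KKT_P N m mt D a w Pi y z \<longleftrightarrow> w \<in> vecs m \<and>
     (\<forall>t<N. Pi t \<in> mats m (mt t) \<and> y t \<in> vecs m \<and> z t \<in> vecs (mt t)) \<and>
     (\<lambda>i. \<Sum>t<N. y t i) \<in> vsubdiff m (delta_simplex m) w \<and>
     (\<forall>t<N. (\<lambda>i j. if i < m \<and> j < mt t then - (D t i j + y t i + z t j) else 0)
              \<in> msubdiff m (mt t) (delta_plus m (mt t)) (Pi t)) \<and>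
     (\<forall>t<N. (\<forall>i<m. (\<Sum>j<mt t. Pi t i j) = w i) \<and> (\<forall>j<mt t. (\<Sum>i<m. Pi t i j) = a t j))"

definition KKT_D where
  "KKT_D N m mt D a u V y z lam Lam \<longleftrightarrow> u \<in> vecs m \<and> lam \<in> vecs m \<and>
     (\<forall>t<N. V t \<in> mats m (mt t) \<and> y t \<in> vecs m \<and> z t \<in> vecs (mt t) \<and> Lam t \<in> mats m (mt t)) \<and>
     lam \<in> vsubdiff m (vconj m (delta_simplex m)) u \<and>
     (\<forall>t<N. (\<lambda>i j. - Lam t i j) \<in> msubdiff m (mt t) (delta_plus m (mt t)) (V t)) \<and>
     (\<forall>t<N. (\<forall>i<m. (\<Sum>j<mt t. Lam t i j) = lam i) \<and> (\<forall>j<mt t. (\<Sum>i<m. Lam t i j) = a t j)) \<and>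
     (\<forall>i<m. (\<Sum>t<N. y t i) - u i = 0) \<and>
     (\<forall>t<N. \<forall>i<m. \<forall>j<mt t. V t i j - D t i j - y t i - z t j = 0)"

end

theory Submission
  imports Defs
begin

text \<open>Problem (P) is a linear program: its constraint w \<in> \<Delta> is implied by the marginal
  constraints, and on dual feasible points the objective of (D) is the negated LP dual objective.
  Strong LP duality, derived from Farkas' lemma (proved by Fourier--Motzkin elimination), yields
  an optimal plan \<Pi> and dual variables (y, z) without duality gap, and complementary slackness
  turns them into a solution of the KKT system of (D).
  Conversely, the subdifferential of the support function of \<Delta> at u consists of the maximisers
  of \<langle>u, -\<rangle> on \<Delta>, and that of the indicator of the orthant at \<Pi> is its normal cone at \<Pi>;
  hence every KKT point of (D) is a primal-dual pair with zero gap, weak duality makes both parts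
  optimal, and the same data solve the KKT system of (P).\<close>

section \<open>Farkas' lemma by Fourier--Motzkin elimination\<close>

definition satisfies :: "'v set \<Rightarrow> ('v \<Rightarrow> real) \<Rightarrow> ('v \<Rightarrow> real) \<times> real \<Rightarrow> bool" where
  "satisfies V x c \<longleftrightarrow> (\<Sum>v\<in>V. fst c v * x v) \<le> snd c"

inductive_set ineq_cone :: "(('v \<Rightarrow> real) \<times> real) set \<Rightarrow> (('v \<Rightarrow> real) \<times> real) set" for S where
  zero: "(\<lambda>_. 0, 0) \<in> ineq_cone S"
| base: "c \<in> S \<Longrightarrow> c \<in> ineq_cone S"
| add: "p \<in> ineq_cone S \<Longrightarrow> q \<in> ineq_cone S \<Longrightarrow> (\<lambda>v. fst p v + fst q v, snd p + snd q) \<in> ineq_cone S"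
| scale: "p \<in> ineq_cone S \<Longrightarrow> 0 \<le> k \<Longrightarrow> (\<lambda>v. k * fst p v, k * snd p) \<in> ineq_cone S"

lemma ineq_cone_mono: "p \<in> ineq_cone S' \<Longrightarrow> S' \<subseteq> ineq_cone S \<Longrightarrow> p \<in> ineq_cone S"
  by (induction p rule: ineq_cone.induct) (auto intro: ineq_cone.intros)

lemma ineq_cone_coeff_zero: "p \<in> ineq_cone S \<Longrightarrow> \<forall>c\<in>S. fst c v = 0 \<Longrightarrow> fst p v = 0"
  by (induction p rule: ineq_cone.induct) auto

definition eliminate :: "'v \<Rightarrow> ('v \<Rightarrow> real) \<times> real \<Rightarrow> ('v \<Rightarrow> real) \<times> real \<Rightarrow> ('v \<Rightarrow> real) \<times> real" where
  "eliminate v p q = (\<lambda>u. - fst q v * fst p u + fst p v * fst q u, - fst q v * snd p + fst p v * snd q)"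

definition fm_eliminate :: "'v \<Rightarrow> (('v \<Rightarrow> real) \<times> real) set \<Rightarrow> (('v \<Rightarrow> real) \<times> real) set" where
  "fm_eliminate v S = {c \<in> S. fst c v = 0} \<union>
     (\<lambda>(p, q). eliminate v p q) ` ({p \<in> S. 0 < fst p v} \<times> {q \<in> S. fst q v < 0})"

lemma finite_fm_eliminate: "finite S \<Longrightarrow> finite (fm_eliminate v S)"
  by (simp add: fm_eliminate_def)

lemma fm_eliminate_coeff_zero: "c \<in> fm_eliminate v S \<Longrightarrow> fst c v = 0"
  by (auto simp: fm_eliminate_def eliminate_def)

lemma fm_eliminate_subset_cone: "fm_eliminate v S \<subseteq> ineq_cone S"
proof
  fix c assume "c \<in> fm_eliminate v S"
  then consider "c \<in> S"
    | p q where "p \<in> S" "q \<in> S" "0 < fst p v" "fst q v < 0" "c = eliminate v p q"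
    by (auto simp: fm_eliminate_def)
  then show "c \<in> ineq_cone S"
  proof cases
    case 2
    then have "0 \<le> - fst q v" "0 \<le> fst p v" by auto
    from ineq_cone.add[OF ineq_cone.scale[OF ineq_cone.base[OF \<open>p \<in> S\<close>] this(1)]
                          ineq_cone.scale[OF ineq_cone.base[OF \<open>q \<in> S\<close>] this(2)]]
    show ?thesis by (simp add: 2 eliminate_def)
  qed (rule ineq_cone.base)
qed

lemma satisfies_eliminate_bound_le:
  assumes "0 < fst p v" "fst q v < 0" "satisfies V x (eliminate v p q)"
  shows "(snd q - (\<Sum>u\<in>V. fst q u * x u)) / fst q v \<le> (snd p - (\<Sum>u\<in>V. fst p u * x u)) / fst p v"
proof -
  have "(\<Sum>u\<in>V. (- fst q v * fst p u + fst p v * fst q u) * x u)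
      = - fst q v * (\<Sum>u\<in>V. fst p u * x u) + fst p v * (\<Sum>u\<in>V. fst q u * x u)"
    by (simp add: sum_distrib_left sum.distrib[symmetric] algebra_simps)
  then have "fst p v * ((\<Sum>u\<in>V. fst q u * x u) - snd q) \<le> - fst q v * (snd p - (\<Sum>u\<in>V. fst p u * x u))"
    using assms(3) by (simp add: satisfies_def eliminate_def algebra_simps)
  then show ?thesis
    using assms(1,2) by (simp add: divide_simps) (simp add: algebra_simps)
qed

text \<open>Fourier--Motzkin: a solution of the eliminated system extends to the original one,
  because each eliminated constraint says that a lower bound on the new variable does not exceed
  an upper bound.\<close>
lemma fm_eliminate_extend:
  fixes x :: "'v \<Rightarrow> real"
  assumes "finite V" "finite S" "v \<notin> V" and sol: "\<forall>c\<in>fm_eliminate v S. satisfies V x c"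
  shows "\<exists>t. \<forall>c\<in>S. satisfies (insert v V) (x(v := t)) c"
proof -
  define P where "P = {p \<in> S. 0 < fst p v}"
  define M where "M = {q \<in> S. fst q v < 0}"
  define rest where "rest c = (\<Sum>u\<in>V. fst c u * x u)" for c :: "('v \<Rightarrow> real) \<times> real"
  define bound where "bound c = (snd c - rest c) / fst c v" for c :: "('v \<Rightarrow> real) \<times> real"
  have fin: "finite P" "finite M" using \<open>finite S\<close> by (auto simp: P_def M_def)
  have lower_le_upper: "bound q \<le> bound p" if "p \<in> P" "q \<in> M" for p q
    using satisfies_eliminate_bound_le[where v = v and p = p and q = q and V = V and x = x] sol that
    by (auto simp: bound_def rest_def P_def M_def fm_eliminate_def)
  define t where "t = (if M = {} then Min (insert 0 (bound ` P)) else Max (bound ` M))"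
  have t_upper: "t \<le> bound p" if "p \<in> P" for p
    using that fin lower_le_upper by (cases "M = {}") (auto simp: t_def)
  have t_lower: "bound q \<le> t" if "q \<in> M" for q
    using that fin by (auto simp: t_def)
  have "satisfies (insert v V) (x(v := t)) c" if "c \<in> S" for c
  proof -
    have "(\<Sum>u\<in>insert v V. fst c u * (x(v := t)) u) = fst c v * t + rest c"
      using \<open>v \<notin> V\<close> \<open>finite V\<close> by (simp add: rest_def) (rule sum.cong, auto)
    moreover consider "0 < fst c v" | "fst c v < 0" | "fst c v = 0" by linarith
    then have "fst c v * t \<le> snd c - rest c"
    proof cases
      case 1
      then show ?thesis using t_upper[of c] that by (simp add: P_def bound_def field_simps)
    next
      case 2
      then show ?thesis using t_lower[of c] that by (simp add: M_def bound_def field_simps)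
    next
      case 3
      then have "c \<in> fm_eliminate v S" using that by (simp add: fm_eliminate_def)
      then show ?thesis using sol 3 by (simp add: satisfies_def rest_def)
    qed
    ultimately show ?thesis by (simp add: satisfies_def)
  qed
  then show ?thesis by blast
qed

lemma farkas_cone:
  assumes "finite V" "finite S" "\<nexists>x. \<forall>c\<in>S. satisfies V x c"
  shows "\<exists>p\<in>ineq_cone S. (\<forall>v\<in>V. fst p v = 0) \<and> snd p < 0"
  using assms
proof (induction V arbitrary: S rule: finite_induct)
  case empty
  then obtain c where "c \<in> S" "snd c < 0" by (auto simp: satisfies_def)
  then show ?case by (auto intro: ineq_cone.base)
next
  case (insert v V)
  have "\<nexists>x. \<forall>c\<in>fm_eliminate v S. satisfies V x c"
    using fm_eliminate_extend[OF insert.hyps(1) insert.prems(1) insert.hyps(2)] insert.prems(2) by blast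
  then obtain p where p: "p \<in> ineq_cone (fm_eliminate v S)" "\<forall>u\<in>V. fst p u = 0" "snd p < 0"
    using insert.IH[OF finite_fm_eliminate[OF insert.prems(1)]] by blast
  have "fst p v = 0"
    using ineq_cone_coeff_zero[OF p(1)] fm_eliminate_coeff_zero by metis
  moreover have "p \<in> ineq_cone S"
    using ineq_cone_mono[OF p(1) fm_eliminate_subset_cone] .
  ultimately show ?case using p by auto
qed

lemma ineq_cone_image_nonneg_comb:
  assumes "finite R" "p \<in> ineq_cone (g ` R)"
  shows "\<exists>l. (\<forall>r\<in>R. 0 \<le> l r) \<and> (\<forall>u. fst p u = (\<Sum>r\<in>R. l r * fst (g r) u))
           \<and> snd p = (\<Sum>r\<in>R. l r * snd (g r))"
  using assms(2)
proof (induction p rule: ineq_cone.induct)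
  case zero
  show ?case by (intro exI[of _ "\<lambda>_. 0"]) auto
next
  case (base c)
  then obtain r0 where "r0 \<in> R" "c = g r0" by auto
  then show ?case
    by (intro exI[of _ "\<lambda>r. if r = r0 then 1 else 0"])
       (simp add: assms(1) if_distrib[of "\<lambda>k. k * _"] sum.delta cong: if_cong)
next
  case (add p q)
  then obtain l1 l2 where
    "(\<forall>r\<in>R. 0 \<le> l1 r) \<and> (\<forall>u. fst p u = (\<Sum>r\<in>R. l1 r * fst (g r) u)) \<and> snd p = (\<Sum>r\<in>R. l1 r * snd (g r))"
    "(\<forall>r\<in>R. 0 \<le> l2 r) \<and> (\<forall>u. fst q u = (\<Sum>r\<in>R. l2 r * fst (g r) u)) \<and> snd q = (\<Sum>r\<in>R. l2 r * snd (g r))"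
    by blast
  then show ?case
    by (intro exI[of _ "\<lambda>r. l1 r + l2 r"]) (simp add: distrib_right sum.distrib)
next
  case (scale p k)
  then obtain l where
    "(\<forall>r\<in>R. 0 \<le> l r) \<and> (\<forall>u. fst p u = (\<Sum>r\<in>R. l r * fst (g r) u)) \<and> snd p = (\<Sum>r\<in>R. l r * snd (g r))"
    by blast
  then show ?case
    by (intro exI[of _ "\<lambda>r. k * l r"]) (simp add: sum_distrib_left mult.assoc scale.hyps)
qed

lemma farkas_lemma:
  fixes A :: "'r \<Rightarrow> 'v \<Rightarrow> real"
  assumes "finite V" "finite R" "\<nexists>x. \<forall>r\<in>R. (\<Sum>v\<in>V. A r v * x v) \<le> b r"
  shows "\<exists>l. (\<forall>r\<in>R. 0 \<le> l r) \<and> (\<forall>v\<in>V. (\<Sum>r\<in>R. l r * A r v) = 0) \<and> (\<Sum>r\<in>R. l r * b r) < 0"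
proof -
  define g where "g r = (A r, b r)" for r
  have "\<nexists>x. \<forall>c\<in>g ` R. satisfies V x c"
    using assms(3) by (simp add: g_def satisfies_def)
  then obtain p where p: "p \<in> ineq_cone (g ` R)" "\<forall>v\<in>V. fst p v = 0" "snd p < 0"
    using farkas_cone[OF assms(1)] assms(2) by blast
  obtain l where "\<forall>r\<in>R. 0 \<le> l r" "\<forall>u. fst p u = (\<Sum>r\<in>R. l r * A r u)"
    "snd p = (\<Sum>r\<in>R. l r * b r)"
    using ineq_cone_image_nonneg_comb[OF assms(2) p(1)] by (auto simp: g_def)
  with p show ?thesis by metis
qed

section \<open>Strong duality for linear programs in standard form\<close>

datatype ('r, 'c) duality_row =
  Primal_le 'r | Primal_ge 'r | Primal_nonneg 'c | Dual_le 'c | Gap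

definition duality_rows :: "'r set \<Rightarrow> 'c set \<Rightarrow> ('r, 'c) duality_row set" where
  "duality_rows R C = Primal_le ` R \<union> Primal_ge ` R \<union> Primal_nonneg ` C \<union> Dual_le ` C \<union> {Gap}"

text \<open>The system "x primal feasible, y dual feasible, objective of x at most that of y",
  as inequalities in the joint variable Inl x, Inr y.\<close>
fun duality_coeff ::
  "('r \<Rightarrow> 'c \<Rightarrow> real) \<Rightarrow> ('r \<Rightarrow> real) \<Rightarrow> ('c \<Rightarrow> real) \<Rightarrow> ('r, 'c) duality_row \<Rightarrow> 'c + 'r \<Rightarrow> real"
where
  "duality_coeff A b cost (Primal_le r) (Inl c) = A r c"
| "duality_coeff A b cost (Primal_ge r) (Inl c) = - A r c"
| "duality_coeff A b cost (Primal_nonneg c) (Inl c') = (if c' = c then -1 else 0)"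
| "duality_coeff A b cost (Dual_le c) (Inr r) = A r c"
| "duality_coeff A b cost Gap (Inl c) = cost c"
| "duality_coeff A b cost Gap (Inr r) = - b r"
| "duality_coeff A b cost _ _ = 0"

fun duality_rhs :: "('r \<Rightarrow> real) \<Rightarrow> ('c \<Rightarrow> real) \<Rightarrow> ('r, 'c) duality_row \<Rightarrow> real" where
  "duality_rhs b cost (Primal_le r) = b r"
| "duality_rhs b cost (Primal_ge r) = - b r"
| "duality_rhs b cost (Dual_le c) = cost c"
| "duality_rhs b cost _ = 0"

lemma finite_duality_rows: "finite R \<Longrightarrow> finite C \<Longrightarrow> finite (duality_rows R C)"
  by (simp add: duality_rows_def)

lemma sum_duality_rows:
  assumes "finite R" "finite C"
  shows "(\<Sum>\<rho>\<in>duality_rows R C. f \<rho>) = (\<Sum>r\<in>R. f (Primal_le r)) + (\<Sum>r\<in>R. f (Primal_ge r))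
     + (\<Sum>c\<in>C. f (Primal_nonneg c)) + (\<Sum>c\<in>C. f (Dual_le c)) + f Gap"
proof -
  have "sum f (duality_rows R C) = sum f (Primal_le ` R) + sum f (Primal_ge ` R)
      + sum f (Primal_nonneg ` C) + sum f (Dual_le ` C) + sum f {Gap}"
    unfolding duality_rows_def using assms
    by (subst sum.union_disjoint, auto)+
  then show ?thesis
    by (simp add: sum.reindex inj_on_def)
qed

lemma duality_system_solution:
  assumes fin: "finite R" "finite C"
    and z: "\<forall>\<rho>\<in>duality_rows R C. (\<Sum>v\<in>C <+> R. duality_coeff A b cost \<rho> v * z v) \<le> duality_rhs b cost \<rho>"
  shows "\<forall>c\<in>C. 0 \<le> z (Inl c)" "\<forall>r\<in>R. (\<Sum>c\<in>C. A r c * z (Inl c)) = b r"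
    "\<forall>c\<in>C. (\<Sum>r\<in>R. A r c * z (Inr r)) \<le> cost c" "(\<Sum>c\<in>C. cost c * z (Inl c)) \<le> (\<Sum>r\<in>R. b r * z (Inr r))"
proof -
  have row: "(\<Sum>v\<in>C <+> R. duality_coeff A b cost \<rho> v * z v) =
      (\<Sum>c\<in>C. duality_coeff A b cost \<rho> (Inl c) * z (Inl c)) + (\<Sum>r\<in>R. duality_coeff A b cost \<rho> (Inr r) * z (Inr r))" for \<rho>
    using fin by (simp add: sum.Plus)
  show "\<forall>c\<in>C. 0 \<le> z (Inl c)"
    using z[rule_format, of "Primal_nonneg _"] fin
    by (auto simp: row duality_rows_def image_iff if_distrib[of "\<lambda>k. k * _"] cong: if_cong)
  show "\<forall>r\<in>R. (\<Sum>c\<in>C. A r c * z (Inl c)) = b r"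
    using z[rule_format, of "Primal_le _"] z[rule_format, of "Primal_ge _"]
    by (force simp: row duality_rows_def sum_negf)
  show "\<forall>c\<in>C. (\<Sum>r\<in>R. A r c * z (Inr r)) \<le> cost c"
    using z[rule_format, of "Dual_le _"] by (auto simp: row duality_rows_def)
  show "(\<Sum>c\<in>C. cost c * z (Inl c)) \<le> (\<Sum>r\<in>R. b r * z (Inr r))"
    using z[rule_format, of Gap] by (simp add: row duality_rows_def sum_negf)
qed

text \<open>The multipliers of a Farkas certificate for this system are \<mu> (the difference of those of
  the rows Primal_le and Primal_ge), \<alpha>, \<beta> and \<theta>; the certificate value is nonnegative as
  soon as both problems are feasible.\<close>
lemma lp_certificate_value_nonneg:
  fixes A :: "'r \<Rightarrow> 'c \<Rightarrow> real"
  assumes "finite R" "finite C"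
    and x0: "\<forall>c\<in>C. 0 \<le> x0 c" "\<forall>r\<in>R. (\<Sum>c\<in>C. A r c * x0 c) = b r"
    and y0: "\<forall>c\<in>C. (\<Sum>r\<in>R. A r c * y0 r) \<le> cost c"
    and sign: "\<forall>c\<in>C. 0 \<le> \<alpha> c" "\<forall>c\<in>C. 0 \<le> \<beta> c" "0 \<le> \<theta>"
    and col_x: "\<forall>c\<in>C. (\<Sum>r\<in>R. \<mu> r * A r c) - \<alpha> c + \<theta> * cost c = 0"
    and col_y: "\<forall>r\<in>R. (\<Sum>c\<in>C. A r c * \<beta> c) = \<theta> * b r"
  shows "0 \<le> (\<Sum>r\<in>R. \<mu> r * b r) + (\<Sum>c\<in>C. cost c * \<beta> c)"
proof (cases "\<theta> = 0")
  case True
  have "(\<Sum>r\<in>R. \<mu> r * b r) = (\<Sum>r\<in>R. \<mu> r * (\<Sum>c\<in>C. A r c * x0 c))"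
    using x0(2) by simp
  also have "\<dots> = (\<Sum>c\<in>C. x0 c * (\<Sum>r\<in>R. \<mu> r * A r c))"
    by (simp add: sum_distrib_left sum.swap[of _ C] algebra_simps)
  also have "\<dots> = (\<Sum>c\<in>C. x0 c * \<alpha> c)"
    using col_x True by (intro sum.cong) auto
  also have "0 \<le> \<dots>"
    using x0(1) sign(1) by (intro sum_nonneg) auto
  finally have "0 \<le> (\<Sum>r\<in>R. \<mu> r * b r)" .
  moreover have "(\<Sum>c\<in>C. \<beta> c * (\<Sum>r\<in>R. A r c * y0 r)) \<le> (\<Sum>c\<in>C. cost c * \<beta> c)"
    using y0 sign(2) by (intro sum_mono) (simp add: mult.commute mult_left_mono)
  moreover have "(\<Sum>c\<in>C. \<beta> c * (\<Sum>r\<in>R. A r c * y0 r)) = (\<Sum>r\<in>R. y0 r * (\<Sum>c\<in>C. A r c * \<beta> c))"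
    by (simp add: sum_distrib_left sum.swap[of _ C] algebra_simps)
  moreover have "\<dots> = 0"
    using col_y True by simp
  ultimately show ?thesis by linarith
next
  case False
  with sign(3) have "0 < \<theta>" by simp
  have "\<theta> * ((\<Sum>r\<in>R. \<mu> r * b r) + (\<Sum>c\<in>C. cost c * \<beta> c))
      = (\<Sum>r\<in>R. \<mu> r * (\<theta> * b r)) + (\<Sum>c\<in>C. \<beta> c * (\<theta> * cost c))"
    by (simp add: distrib_left sum_distrib_left algebra_simps)
  also have "\<dots> = (\<Sum>r\<in>R. \<mu> r * (\<Sum>c\<in>C. A r c * \<beta> c)) + (\<Sum>c\<in>C. \<beta> c * (\<alpha> c - (\<Sum>r\<in>R. \<mu> r * A r c)))"
  proof -
    have "\<theta> * cost c = \<alpha> c - (\<Sum>r\<in>R. \<mu> r * A r c)" if "c \<in> C" for c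
      using col_x that by (simp add: algebra_simps)
    then show ?thesis
      using col_y by (intro arg_cong2[where f = "(+)"] sum.cong) auto
  qed
  also have "\<dots> = (\<Sum>c\<in>C. \<beta> c * \<alpha> c)"
    by (simp add: right_diff_distrib sum_subtractf sum_distrib_left sum.swap[of _ C] algebra_simps)
  also have "0 \<le> \<dots>"
    using sign(1,2) by (intro sum_nonneg) auto
  finally show ?thesis
    using \<open>0 < \<theta>\<close> by (simp add: zero_le_mult_iff)
qed

lemma duality_system_certificate_nonneg:
  fixes A :: "'r \<Rightarrow> 'c \<Rightarrow> real"
  assumes fin: "finite R" "finite C"
    and x0: "\<forall>c\<in>C. 0 \<le> x0 c" "\<forall>r\<in>R. (\<Sum>c\<in>C. A r c * x0 c) = b r"
    and y0: "\<forall>c\<in>C. (\<Sum>r\<in>R. A r c * y0 r) \<le> cost c"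
    and l_nonneg: "\<forall>\<rho>\<in>duality_rows R C. 0 \<le> l \<rho>"
    and cols: "\<forall>v\<in>C <+> R. (\<Sum>\<rho>\<in>duality_rows R C. l \<rho> * duality_coeff A b cost \<rho> v) = 0"
  shows "0 \<le> (\<Sum>\<rho>\<in>duality_rows R C. l \<rho> * duality_rhs b cost \<rho>)"
proof -
  define \<mu> where "\<mu> r = l (Primal_le r) - l (Primal_ge r)" for r
  have "0 \<le> (\<Sum>r\<in>R. \<mu> r * b r) + (\<Sum>c\<in>C. cost c * l (Dual_le c))"
  proof (rule lp_certificate_value_nonneg[OF fin x0 y0])
    show "\<forall>c\<in>C. 0 \<le> l (Primal_nonneg c)" "\<forall>c\<in>C. 0 \<le> l (Dual_le c)" "0 \<le> l Gap"
      using l_nonneg by (auto simp: duality_rows_def)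
    show "\<forall>c\<in>C. (\<Sum>r\<in>R. \<mu> r * A r c) - l (Primal_nonneg c) + l Gap * cost c = 0"
    proof
      fix c assume "c \<in> C"
      then show "(\<Sum>r\<in>R. \<mu> r * A r c) - l (Primal_nonneg c) + l Gap * cost c = 0"
        using cols[rule_format, OF InlI] fin
        by (simp add: sum_duality_rows \<mu>_def left_diff_distrib sum_subtractf sum_negf
            if_distrib[of "\<lambda>k. _ * k"] cong: if_cong)
    qed
    show "\<forall>r\<in>R. (\<Sum>c\<in>C. A r c * l (Dual_le c)) = l Gap * b r"
    proof
      fix r assume "r \<in> R"
      then show "(\<Sum>c\<in>C. A r c * l (Dual_le c)) = l Gap * b r"
        using cols[rule_format, OF InrI] fin by (simp add: sum_duality_rows mult.commute)
    qed
  qed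
  also have "\<dots> = (\<Sum>\<rho>\<in>duality_rows R C. l \<rho> * duality_rhs b cost \<rho>)"
    using fin by (simp add: sum_duality_rows \<mu>_def left_diff_distrib right_diff_distrib sum_subtractf
        sum_negf mult.commute)
  finally show ?thesis .
qed

lemma lp_strong_duality:
  fixes A :: "'r \<Rightarrow> 'c \<Rightarrow> real"
  assumes fin: "finite R" "finite C"
    and x0: "\<forall>c\<in>C. 0 \<le> x0 c" "\<forall>r\<in>R. (\<Sum>c\<in>C. A r c * x0 c) = b r"
    and y0: "\<forall>c\<in>C. (\<Sum>r\<in>R. A r c * y0 r) \<le> cost c"
  obtains x y where "\<forall>c\<in>C. 0 \<le> x c" "\<forall>r\<in>R. (\<Sum>c\<in>C. A r c * x c) = b r"
    "\<forall>c\<in>C. (\<Sum>r\<in>R. A r c * y r) \<le> cost c" "(\<Sum>c\<in>C. cost c * x c) \<le> (\<Sum>r\<in>R. b r * y r)"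
proof (cases "\<exists>z. \<forall>\<rho>\<in>duality_rows R C.
    (\<Sum>v\<in>C <+> R. duality_coeff A b cost \<rho> v * z v) \<le> duality_rhs b cost \<rho>")
  case True
  then obtain z where "\<forall>\<rho>\<in>duality_rows R C.
      (\<Sum>v\<in>C <+> R. duality_coeff A b cost \<rho> v * z v) \<le> duality_rhs b cost \<rho>"
    by blast
  from duality_system_solution[OF fin this] show ?thesis
    by (intro that[of "z \<circ> Inl" "z \<circ> Inr"]) simp_all
next
  case False
  from farkas_lemma[OF finite_Plus[OF fin(2,1)] finite_duality_rows[OF fin] False]
    duality_system_certificate_nonneg[OF fin x0 y0]
  show ?thesis by (meson not_le)
qed

section \<open>Subdifferentials of the indicator functions\<close>

lemma sum_sum_delta:
  fixes f :: "'a \<Rightarrow> 'b \<Rightarrow> real"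
  assumes "finite A" "\<forall>x\<in>A. finite (B x)" "a \<in> A" "b \<in> B a"
  shows "(\<Sum>x\<in>A. \<Sum>y\<in>B x. if x = a \<and> y = b then f x y else 0) = f a b"
proof -
  have "(\<Sum>y\<in>B x. if x = a \<and> y = b then f x y else 0) = (if x = a then f x b else 0)"
    if "x \<in> A" for x
    using assms that by (cases "x = a") simp_all
  then show ?thesis using assms by simp
qed

lemma sum_sum_delta':
  fixes f :: "'a \<Rightarrow> 'b \<Rightarrow> real"
  assumes "finite A" "\<forall>x\<in>A. finite (B x)" "a \<in> A" "b \<in> B a"
  shows "(\<Sum>x\<in>A. \<Sum>y\<in>B x. if a = x \<and> b = y then f x y else 0) = f a b"
  using sum_sum_delta[OF assms, of f] by (simp add: eq_commute)

lemma sum_delta_plus: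
  "finite A \<Longrightarrow> (\<Sum>t\<in>A. delta_plus m (n t) (X t)) = (if \<forall>t\<in>A. X t \<in> nonneg_mats m (n t) then 0 else \<infinity>)"
  by (induction A rule: finite_induct) (auto simp: delta_plus_def)

lemma vinner_le_vconj_simplex: "x \<in> simplex m \<Longrightarrow> ereal (vinner m u x) \<le> vconj m (delta_simplex m) u"
  unfolding vconj_def by (rule SUP_upper2[of x]) (auto simp: simplex_def delta_simplex_def)

lemma vconj_simplex_le:
  "(\<And>x. x \<in> simplex m \<Longrightarrow> vinner m u x \<le> c) \<Longrightarrow> vconj m (delta_simplex m) u \<le> ereal c"
  unfolding vconj_def by (rule SUP_least) (auto simp: delta_simplex_def)

lemma vconj_simplex_eq_max:
  assumes "lam \<in> simplex m" "\<forall>x\<in>simplex m. vinner m u x \<le> vinner m u lam"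
  shows "vconj m (delta_simplex m) u = ereal (vinner m u lam)"
  using assms by (intro antisym vconj_simplex_le vinner_le_vconj_simplex) auto

lemma vconj_simplex_neq_minf:
  assumes "1 \<le> m"
  shows "vconj m (delta_simplex m) u \<noteq> -\<infinity>"
proof -
  have "(\<lambda>i. if i = 0 then 1 else 0) \<in> simplex m"
    using assms by (auto simp: simplex_def vecs_def)
  from vinner_le_vconj_simplex[OF this, of u] show ?thesis by auto
qed

lemma minner_nonneg:
  "(\<forall>i<m. \<forall>j<n. 0 \<le> A i j) \<Longrightarrow> (\<forall>i<m. \<forall>j<n. 0 \<le> B i j) \<Longrightarrow> 0 \<le> minner m n A B"
  unfolding minner_def by (auto intro!: sum_nonneg)

lemma msubdiff_delta_plus_iff:
  "G \<in> msubdiff m n (delta_plus m n) X \<longleftrightarrow>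
     G \<in> mats m n \<and> X \<in> nonneg_mats m n \<and> (\<forall>i<m. \<forall>j<n. G i j \<le> 0) \<and> minner m n G X = 0"
proof
  assume G: "G \<in> msubdiff m n (delta_plus m n) X"
  then have X: "X \<in> nonneg_mats m n"
    by (auto simp: msubdiff_def delta_plus_def split: if_splits)
  have test: "minner m n G (\<lambda>i j. Y i j - X i j) \<le> 0" if "Y \<in> nonneg_mats m n" for Y
    using G X that by (auto simp: msubdiff_def delta_plus_def nonneg_mats_def)
  have "G i j \<le> 0" if "i < m" "j < n" for i j
  proof -
    have "(\<lambda>i' j'. X i' j' + (if i' = i \<and> j' = j then 1 else 0)) \<in> nonneg_mats m n"
      using X that by (auto simp: nonneg_mats_def mats_def)
    from test[OF this] show ?thesis
      using that by (simp add: minner_def if_distrib[of "\<lambda>k. _ * k"] sum_sum_delta cong: if_cong)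
  qed
  moreover have "minner m n G X = 0"
  proof -
    have "(\<lambda>i j. 0) \<in> nonneg_mats m n" "(\<lambda>i j. 2 * X i j) \<in> nonneg_mats m n"
      using X by (auto simp: nonneg_mats_def mats_def)
    from this[THEN test] show ?thesis
      by (simp add: minner_def sum_negf)
  qed
  ultimately show "G \<in> mats m n \<and> X \<in> nonneg_mats m n \<and> (\<forall>i<m. \<forall>j<n. G i j \<le> 0) \<and> minner m n G X = 0"
    using G X by (auto simp: msubdiff_def)
next
  assume G: "G \<in> mats m n \<and> X \<in> nonneg_mats m n \<and> (\<forall>i<m. \<forall>j<n. G i j \<le> 0) \<and> minner m n G X = 0"
  have "delta_plus m n X + ereal (minner m n G (\<lambda>i j. Y i j - X i j)) \<le> delta_plus m n Y" for Y
  proof (cases "Y \<in> nonneg_mats m n")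
    case True
    have "minner m n G (\<lambda>i j. Y i j - X i j) = - minner m n (\<lambda>i j. - G i j) Y"
      using G by (simp add: minner_def right_diff_distrib sum_subtractf sum_negf)
    moreover have "0 \<le> minner m n (\<lambda>i j. - G i j) Y"
      using G True by (intro minner_nonneg) (auto simp: nonneg_mats_def)
    ultimately show ?thesis using G True by (simp add: delta_plus_def)
  qed (simp add: delta_plus_def)
  moreover have "delta_plus m n X = 0"
    using G by (simp add: delta_plus_def)
  ultimately show "G \<in> msubdiff m n (delta_plus m n) X"
    using G by (simp add: msubdiff_def nonneg_mats_def)
qed

lemma neg_in_msubdiff_delta_plus:
  assumes "V \<in> nonneg_mats m n" "L \<in> nonneg_mats m n" "minner m n V L = 0"
  shows "(\<lambda>i j. if i < m \<and> j < n then - V i j else 0) \<in> msubdiff m n (delta_plus m n) L"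
proof -
  have "minner m n (\<lambda>i j. if i < m \<and> j < n then - V i j else 0) L = - minner m n V L"
    unfolding minner_def sum_negf[symmetric] by (intro sum.cong refl) simp
  then show ?thesis
    using assms by (simp add: msubdiff_delta_plus_iff mats_def nonneg_mats_def)
qed

lemma vsubdiff_delta_simplexI:
  assumes "g \<in> vecs m" "w \<in> simplex m" "\<forall>x\<in>simplex m. vinner m g x \<le> vinner m g w"
  shows "g \<in> vsubdiff m (delta_simplex m) w"
proof -
  have "delta_simplex m w + ereal (vinner m g (\<lambda>i. y i - w i)) \<le> delta_simplex m y" for y
  proof (cases "y \<in> simplex m")
    case True
    have "vinner m g (\<lambda>i. y i - w i) = vinner m g y - vinner m g w"
      by (simp add: vinner_def right_diff_distrib sum_subtractf)
    then show ?thesis using True assms(2,3) by (simp add: delta_simplex_def)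
  qed (simp add: delta_simplex_def)
  moreover have "delta_simplex m w = 0"
    using assms(2) by (simp add: delta_simplex_def)
  ultimately show ?thesis
    using assms(1) assms(2)[unfolded simplex_def] by (simp add: vsubdiff_def)
qed

lemma vsubdiff_vconj_simplexI:
  assumes "u \<in> vecs m" "lam \<in> simplex m" "\<forall>x\<in>simplex m. vinner m u x \<le> vinner m u lam"
  shows "lam \<in> vsubdiff m (vconj m (delta_simplex m)) u"
proof -
  have conj_u: "vconj m (delta_simplex m) u = ereal (vinner m u lam)"
    using assms(2,3) by (rule vconj_simplex_eq_max)
  have "vconj m (delta_simplex m) u + ereal (vinner m lam (\<lambda>i. y i - u i)) \<le> vconj m (delta_simplex m) y" for y
  proof -
    have "vinner m u lam + vinner m lam (\<lambda>i. y i - u i) = vinner m y lam"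
      by (simp add: vinner_def algebra_simps sum_subtractf)
    then show ?thesis using conj_u vinner_le_vconj_simplex[OF assms(2), of y] by simp
  qed
  then show ?thesis
    using assms conj_u by (simp add: vsubdiff_def simplex_def)
qed

lemma vsubdiff_vconj_simplex_finite:
  assumes "lam \<in> vsubdiff m (vconj m (delta_simplex m)) u"
  obtains U where "vconj m (delta_simplex m) u = ereal U"
  using assms by (cases "vconj m (delta_simplex m) u") (auto simp: vsubdiff_def)

lemma vsubdiff_vconj_simplex_test:
  assumes "lam \<in> vsubdiff m (vconj m (delta_simplex m)) u" "vconj m (delta_simplex m) u = ereal U"
    and "y \<in> vecs m" "\<And>x. x \<in> simplex m \<Longrightarrow> vinner m y x \<le> c"
  shows "U + vinner m lam (\<lambda>i. y i - u i) \<le> c"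
proof -
  have "ereal (U + vinner m lam (\<lambda>i. y i - u i)) \<le> vconj m (delta_simplex m) y"
    using assms(1-3) by (auto simp: vsubdiff_def)
  also have "\<dots> \<le> ereal c"
    using vconj_simplex_le[OF assms(4)] .
  finally show ?thesis by simp
qed

text \<open>Testing the subgradient inequality at u - e_k and at u + c e gives lam \<ge> 0 and \<Sum> lam = 1.\<close>
lemma vsubdiff_vconj_simplex_mem:
  assumes "lam \<in> vsubdiff m (vconj m (delta_simplex m)) u"
  shows "lam \<in> simplex m"
proof -
  obtain U where U: "vconj m (delta_simplex m) u = ereal U"
    using vsubdiff_vconj_simplex_finite[OF assms] .
  have vecs: "lam \<in> vecs m" "u \<in> vecs m"
    using assms by (auto simp: vsubdiff_def)
  have below_U: "vinner m u x \<le> U" if "x \<in> simplex m" for x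
    using vinner_le_vconj_simplex[OF that, of u] U by simp
  have "0 \<le> lam k" if "k < m" for k
  proof -
    have "U + vinner m lam (\<lambda>i. (u i - (if i = k then 1 else 0)) - u i) \<le> U"
    proof (rule vsubdiff_vconj_simplex_test[OF assms U])
      show "(\<lambda>i. u i - (if i = k then 1 else 0)) \<in> vecs m"
        using vecs that by (auto simp: vecs_def)
      fix x assume x: "x \<in> simplex m"
      then have "0 \<le> x k" using that by (simp add: simplex_def)
      then show "vinner m (\<lambda>i. u i - (if i = k then 1 else 0)) x \<le> U"
        using below_U[OF x] that by (simp add: simplex_def vinner_def sum_subtractf left_diff_distrib
            if_distrib[of "\<lambda>k. k * _"] cong: if_cong)
    qed
    then show ?thesis
      using that by (simp add: vinner_def sum_negf if_distrib[of "\<lambda>k. _ * k"] cong: if_cong)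
  qed
  moreover have "c * (\<Sum>i<m. lam i) \<le> c" for c
  proof -
    have "U + vinner m lam (\<lambda>i. (u i + (if i < m then c else 0)) - u i) \<le> U + c"
    proof (rule vsubdiff_vconj_simplex_test[OF assms U])
      show "(\<lambda>i. u i + (if i < m then c else 0)) \<in> vecs m"
        using vecs by (auto simp: vecs_def)
      fix x assume "x \<in> simplex m"
      then show "vinner m (\<lambda>i. u i + (if i < m then c else 0)) x \<le> U + c"
        using below_U[of x] by (simp add: simplex_def vinner_def distrib_right sum.distrib sum_distrib_left[symmetric])
    qed
    then show ?thesis
      by (simp add: vinner_def sum_distrib_left mult.commute)
  qed
  from this[of 1] this[of "-1"] have "(\<Sum>i<m. lam i) = 1" by simp
  ultimately show ?thesis
    using vecs by (simp add: simplex_def)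
qed

text \<open>The test point 0 shows that \<langle>u, lam\<rangle> attains \<delta>*(u).\<close>
lemma vsubdiff_vconj_simplexD:
  assumes "lam \<in> vsubdiff m (vconj m (delta_simplex m)) u"
  shows "u \<in> vecs m" "lam \<in> simplex m" "\<forall>x\<in>simplex m. vinner m u x \<le> vinner m u lam"
proof -
  obtain U where U: "vconj m (delta_simplex m) u = ereal U"
    using vsubdiff_vconj_simplex_finite[OF assms] .
  have "U + vinner m lam (\<lambda>i. 0 - u i) \<le> 0"
    by (rule vsubdiff_vconj_simplex_test[OF assms U]) (auto simp: vecs_def vinner_def)
  then have "U \<le> vinner m u lam"
    by (simp add: vinner_def sum_negf mult.commute)
  then show "\<forall>x\<in>simplex m. vinner m u x \<le> vinner m u lam"
    using vinner_le_vconj_simplex[of _ m u] U by force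
  show "u \<in> vecs m" using assms by (simp add: vsubdiff_def)
  show "lam \<in> simplex m" using vsubdiff_vconj_simplex_mem[OF assms] .
qed

section \<open>Weak duality and the KKT system of (D)\<close>

lemma P_obj_eq:
  "P_obj N m mt D w Pi = (if w \<in> simplex m \<and> (\<forall>t<N. Pi t \<in> nonneg_mats m (mt t))
     then ereal (\<Sum>t<N. minner m (mt t) (D t) (Pi t)) else \<infinity>)"
  by (auto simp: P_obj_def delta_simplex_def sum_delta_plus)

lemma D_obj_eq:
  assumes "1 \<le> m"
  shows "D_obj N m mt a u V z = (if \<forall>t<N. V t \<in> nonneg_mats m (mt t)
     then vconj m (delta_simplex m) u + ereal (\<Sum>t<N. vinner (mt t) (z t) (a t)) else \<infinity>)"
  using vconj_simplex_neq_minf[OF assms, of u]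
  by (cases "vconj m (delta_simplex m) u") (auto simp: D_obj_def sum_delta_plus)

lemma minner_rank_one_shift:
  assumes "\<forall>i<m. \<forall>j<n. V i j = D i j + y i + z j"
    and "\<forall>i<m. (\<Sum>j<n. P i j) = w i" and "\<forall>j<n. (\<Sum>i<m. P i j) = a j"
  shows "minner m n D P = minner m n V P - vinner m y w - vinner n z a"
proof -
  have "minner m n D P = (\<Sum>i<m. \<Sum>j<n. V i j * P i j - y i * P i j - z j * P i j)"
    unfolding minner_def using assms(1) by (intro sum.cong refl) (simp add: algebra_simps)
  also have "\<dots> = minner m n V P - (\<Sum>i<m. y i * (\<Sum>j<n. P i j)) - (\<Sum>j<n. z j * (\<Sum>i<m. P i j))"
    unfolding minner_def sum_subtractf sum_distrib_left
    by (subst (2) sum.swap) (simp add: sum_distrib_left)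
  also have "\<dots> = minner m n V P - vinner m y w - vinner n z a"
    using assms(2,3) by (simp add: vinner_def)
  finally show ?thesis .
qed

lemma D_feasible_entries:
  "D_feasible N m mt D u V y z \<Longrightarrow> t < N \<Longrightarrow> \<forall>i<m. \<forall>j<mt t. V t i j = D t i j + y t i + z t j"
  by (simp add: D_feasible_def algebra_simps)

lemma feasible_objective_identity:
  assumes "P_feasible N m mt a w Pi" "D_feasible N m mt D u V y z"
  shows "(\<Sum>t<N. minner m (mt t) (D t) (Pi t)) =
    (\<Sum>t<N. minner m (mt t) (V t) (Pi t)) - vinner m u w - (\<Sum>t<N. vinner (mt t) (z t) (a t))"
proof -
  have "(\<Sum>t<N. minner m (mt t) (D t) (Pi t))
      = (\<Sum>t<N. minner m (mt t) (V t) (Pi t) - vinner m (y t) w - vinner (mt t) (z t) (a t))"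
    using assms D_feasible_entries[OF assms(2)]
    by (intro sum.cong refl minner_rank_one_shift) (auto simp: P_feasible_def)
  moreover have "(\<Sum>t<N. vinner m (y t) w) = vinner m u w"
    using assms(2) unfolding vinner_def
    by (subst sum.swap) (simp add: D_feasible_def sum_distrib_right[symmetric])
  ultimately show ?thesis by (simp add: sum_subtractf)
qed

lemma weak_duality:
  assumes "1 \<le> m" "P_feasible N m mt a w Pi" "D_feasible N m mt D u V y z"
  shows "0 \<le> P_obj N m mt D w Pi + D_obj N m mt a u V z"
proof (cases "w \<in> simplex m \<and> (\<forall>t<N. Pi t \<in> nonneg_mats m (mt t)) \<and> (\<forall>t<N. V t \<in> nonneg_mats m (mt t))")
  case True
  let ?za = "\<Sum>t<N. vinner (mt t) (z t) (a t)"
  have "0 \<le> (\<Sum>t<N. minner m (mt t) (V t) (Pi t))"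
    using True by (intro sum_nonneg minner_nonneg) (auto simp: nonneg_mats_def)
  then have "- vinner m u w - ?za \<le> (\<Sum>t<N. minner m (mt t) (D t) (Pi t))"
    using feasible_objective_identity[OF assms(2,3)] by simp
  moreover have "ereal (vinner m u w) \<le> vconj m (delta_simplex m) u"
    using True vinner_le_vconj_simplex by blast
  ultimately show ?thesis
    using True vconj_simplex_neq_minf[OF assms(1), of u]
    by (cases "vconj m (delta_simplex m) u") (simp_all add: P_obj_eq D_obj_eq[OF assms(1)])
next
  case False
  then show ?thesis
    using vconj_simplex_neq_minf[OF assms(1), of u]
    by (cases "vconj m (delta_simplex m) u") (auto simp: P_obj_eq D_obj_eq[OF assms(1)])
qed

lemma KKT_D_imp_feasible:
  "KKT_D N m mt D a u V y z lam Lam \<Longrightarrow> P_feasible N m mt a lam Lam \<and> D_feasible N m mt D u V y z"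
  by (auto simp: KKT_D_def P_feasible_def D_feasible_def)

lemma KKT_D_complementarity:
  assumes "KKT_D N m mt D a u V y z lam Lam"
  shows "lam \<in> simplex m" "\<forall>x\<in>simplex m. vinner m u x \<le> vinner m u lam"
    and "\<forall>t<N. V t \<in> nonneg_mats m (mt t) \<and> Lam t \<in> nonneg_mats m (mt t) \<and> minner m (mt t) (V t) (Lam t) = 0"
proof -
  show "lam \<in> simplex m" "\<forall>x\<in>simplex m. vinner m u x \<le> vinner m u lam"
    using assms vsubdiff_vconj_simplexD by (auto simp: KKT_D_def)
  show "\<forall>t<N. V t \<in> nonneg_mats m (mt t) \<and> Lam t \<in> nonneg_mats m (mt t) \<and> minner m (mt t) (V t) (Lam t) = 0"
    using assms by (auto simp: KKT_D_def msubdiff_delta_plus_iff nonneg_mats_def minner_def sum_negf mult.commute)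
qed

lemma KKT_D_zero_gap:
  assumes "KKT_D N m mt D a u V y z lam Lam"
  obtains K where "P_obj N m mt D lam Lam = ereal (- K)" "D_obj N m mt a u V z = ereal K"
proof
  note feasible = KKT_D_imp_feasible[OF assms] and compl = KKT_D_complementarity[OF assms]
  let ?K = "vinner m u lam + (\<Sum>t<N. vinner (mt t) (z t) (a t))"
  have "(\<Sum>t<N. minner m (mt t) (D t) (Lam t)) = - ?K"
    using feasible_objective_identity[OF feasible[THEN conjunct1] feasible[THEN conjunct2]] compl(3)
    by simp
  then show "P_obj N m mt D lam Lam = ereal (- ?K)"
    using compl by (simp add: P_obj_eq)
  show "D_obj N m mt a u V z = ereal ?K"
    using compl vconj_simplex_eq_max[OF compl(1,2)] by (simp add: D_obj_def sum_delta_plus)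
qed

lemma KKT_D_imp_D_optimal:
  assumes "1 \<le> m" "KKT_D N m mt D a u V y z lam Lam"
  shows "D_optimal N m mt D a u V y z"
proof -
  obtain K where K: "P_obj N m mt D lam Lam = ereal (- K)" "D_obj N m mt a u V z = ereal K"
    using KKT_D_zero_gap[OF assms(2)] .
  have "D_obj N m mt a u V z \<le> D_obj N m mt a u' V' z'" if "D_feasible N m mt D u' V' y' z'" for u' V' y' z'
    using weak_duality[OF assms(1) KKT_D_imp_feasible[OF assms(2), THEN conjunct1] that] K
    by (cases "D_obj N m mt a u' V' z'") auto
  then show ?thesis
    using KKT_D_imp_feasible[OF assms(2)] by (auto simp: D_optimal_def)
qed

lemma KKT_D_imp_P_optimal:
  assumes "1 \<le> m" "KKT_D N m mt D a u V y z lam Lam"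
  shows "P_optimal N m mt D a lam Lam"
proof -
  obtain K where K: "P_obj N m mt D lam Lam = ereal (- K)" "D_obj N m mt a u V z = ereal K"
    using KKT_D_zero_gap[OF assms(2)] .
  have "P_obj N m mt D lam Lam \<le> P_obj N m mt D w' Pi'" if "P_feasible N m mt a w' Pi'" for w' Pi'
    using weak_duality[OF assms(1) that KKT_D_imp_feasible[OF assms(2), THEN conjunct2]] K
    by (cases "P_obj N m mt D w' Pi'") auto
  then show ?thesis
    using KKT_D_imp_feasible[OF assms(2)] by (auto simp: P_optimal_def)
qed

lemma KKT_D_imp_KKT_P:
  assumes "KKT_D N m mt D a u V y z lam Lam"
  shows "KKT_P N m mt D a lam Lam y z"
proof -
  note compl = KKT_D_complementarity[OF assms]
  have D: "D_feasible N m mt D u V y z" and vecs: "\<forall>t<N. y t \<in> vecs m \<and> z t \<in> vecs (mt t)"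
    using assms by (auto simp: KKT_D_def D_feasible_def)
  have "(\<lambda>i. \<Sum>t<N. y t i) \<in> vsubdiff m (delta_simplex m) lam"
  proof (rule vsubdiff_delta_simplexI[OF _ compl(1)])
    show "(\<lambda>i. \<Sum>t<N. y t i) \<in> vecs m"
      using vecs by (simp add: vecs_def)
    have "vinner m (\<lambda>i. \<Sum>t<N. y t i) x = vinner m u x" for x
      using D unfolding vinner_def D_feasible_def by (intro sum.cong) auto
    then show "\<forall>x\<in>simplex m. vinner m (\<lambda>i. \<Sum>t<N. y t i) x \<le> vinner m (\<lambda>i. \<Sum>t<N. y t i) lam"
      using compl(2) by simp
  qed
  moreover have "(\<lambda>i j. if i < m \<and> j < mt t then - (D t i j + y t i + z t j) else 0)
      \<in> msubdiff m (mt t) (delta_plus m (mt t)) (Lam t)" if "t < N" for t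
  proof -
    have "(\<lambda>i j. if i < m \<and> j < mt t then - (D t i j + y t i + z t j) else 0)
        = (\<lambda>i j. if i < m \<and> j < mt t then - V t i j else 0)"
      using D_feasible_entries[OF D that] by (intro ext) simp
    then show ?thesis
      using compl(3) that by (simp add: neg_in_msubdiff_delta_plus)
  qed
  ultimately show ?thesis
    using assms vecs compl(1) by (auto simp: KKT_P_def KKT_D_def simplex_def)
qed

lemma vinner_simplex_le:
  assumes "x \<in> simplex m" "\<forall>i<m. u i \<le> s"
  shows "vinner m u x \<le> s"
proof -
  have "vinner m u x \<le> (\<Sum>i<m. s * x i)"
    unfolding vinner_def using assms by (intro sum_mono mult_right_mono) (auto simp: simplex_def)
  also have "\<dots> = s"
    using assms(1) by (simp add: simplex_def sum_distrib_left[symmetric])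
  finally show ?thesis .
qed

lemma marginal_in_simplex:
  assumes "w \<in> vecs m" "\<forall>i<m. \<forall>j<n. 0 \<le> P i j"
    and "\<forall>i<m. (\<Sum>j<n. P i j) = w i" "\<forall>j<n. (\<Sum>i<m. P i j) = b j" "(\<Sum>j<n. b j) = 1"
  shows "w \<in> simplex m"
proof -
  have "(\<Sum>i<m. w i) = (\<Sum>i<m. \<Sum>j<n. P i j)"
    using assms(3) by simp
  also have "\<dots> = (\<Sum>j<n. b j)"
    using assms(4) by (subst sum.swap) simp
  moreover have "0 \<le> w i" if "i < m" for i
    using assms(2,3) that by (metis sum_nonneg lessThan_iff)
  ultimately show ?thesis
    using assms(1,5) by (simp add: simplex_def)
qed

text \<open>The bound s on u = (\<lambda>i. \<Sum>t. y t i) stands for \<delta>*(u) = max u.\<close>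
lemma KKT_D_of_zero_gap:
  fixes N :: nat
  assumes "1 \<le> N" "\<forall>t<N. (\<Sum>j<mt t. a t j) = 1"
    and P: "P_feasible N m mt a w Pi" "\<forall>t<N. \<forall>i<m. \<forall>j<mt t. 0 \<le> Pi t i j"
    and yz: "\<forall>t<N. y t \<in> vecs m \<and> z t \<in> vecs (mt t)" "\<forall>t<N. \<forall>i<m. \<forall>j<mt t. 0 \<le> D t i j + y t i + z t j"
    and s: "\<forall>i<m. (\<Sum>t<N. y t i) \<le> s"
    and gap: "(\<Sum>t<N. minner m (mt t) (D t) (Pi t)) + s + (\<Sum>t<N. vinner (mt t) (z t) (a t)) \<le> 0"
  shows "\<exists>u V. KKT_D N m mt D a u V y z w Pi"
proof -
  define u where "u i = (if i < m then \<Sum>t<N. y t i else 0)" for i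
  define V where "V t i j = (if i < m \<and> j < mt t then D t i j + y t i + z t j else 0)" for t i j
  have w: "w \<in> simplex m"
    using P assms(1,2) by (intro marginal_in_simplex[where P = "Pi 0" and n = "mt 0" and b = "a 0"]) (auto simp: P_feasible_def)
  have D: "D_feasible N m mt D u V y z"
    using yz(1) by (auto simp: D_feasible_def u_def V_def vecs_def mats_def)
  have P_nonneg: "\<forall>t<N. Pi t \<in> nonneg_mats m (mt t)" and V_nonneg: "\<forall>t<N. V t \<in> nonneg_mats m (mt t)"
    using P yz(2) by (auto simp: P_feasible_def nonneg_mats_def mats_def V_def)
  have u_le_s: "vinner m u x \<le> s" if "x \<in> simplex m" for x
    using vinner_simplex_le[OF that] s by (simp add: u_def)
  have VP_nonneg: "\<forall>t\<in>{..<N}. 0 \<le> minner m (mt t) (V t) (Pi t)"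
    using P_nonneg V_nonneg by (auto intro!: minner_nonneg simp: nonneg_mats_def)
  have "(\<Sum>t<N. minner m (mt t) (V t) (Pi t)) + (s - vinner m u w) \<le> 0"
    using feasible_objective_identity[OF P(1) D] gap by simp
  moreover have "0 \<le> (\<Sum>t<N. minner m (mt t) (V t) (Pi t))"
    using VP_nonneg by (intro sum_nonneg) auto
  ultimately have VP_zero: "(\<Sum>t<N. minner m (mt t) (V t) (Pi t)) = 0" and "s \<le> vinner m u w"
    using u_le_s[OF w] by linarith+
  then have u_max: "\<forall>x\<in>simplex m. vinner m u x \<le> vinner m u w"
    using u_le_s by fastforce
  have "(\<lambda>i j. - Pi t i j) \<in> msubdiff m (mt t) (delta_plus m (mt t)) (V t)" if "t < N" for t
  proof -
    have "minner m (mt t) (V t) (Pi t) = 0"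
      using VP_zero VP_nonneg that by (subst (asm) sum_nonneg_eq_0_iff) auto
    then show ?thesis
      using P V_nonneg that
      by (auto simp: msubdiff_delta_plus_iff P_feasible_def mats_def nonneg_mats_def minner_def sum_negf mult.commute)
  qed
  moreover have "w \<in> vsubdiff m (vconj m (delta_simplex m)) u"
    using D w u_max by (intro vsubdiff_vconj_simplexI) (auto simp: D_feasible_def)
  ultimately have "KKT_D N m mt D a u V y z w Pi"
    using D P(1) w by (auto simp: KKT_D_def D_feasible_def P_feasible_def simplex_def)
  then show ?thesis by blast
qed

section \<open>Problem (P) as a linear program\<close>

text \<open>The variable Inl (t, i, j) stands for Pi t i j and Inr i for w i; row Inl (t, i) states
  \<Sum>j. Pi t i j = w i and row Inr (t, j) states \<Sum>i. Pi t i j = a t j. The constraint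
  w \<in> simplex m is implied by these rows and therefore not encoded.\<close>

definition transport_cols :: "nat \<Rightarrow> nat \<Rightarrow> (nat \<Rightarrow> nat) \<Rightarrow> (nat \<times> nat \<times> nat + nat) set" where
  "transport_cols N m mt = (SIGMA t:{..<N}. {..<m} \<times> {..<mt t}) <+> {..<m}"

definition transport_rows :: "nat \<Rightarrow> nat \<Rightarrow> (nat \<Rightarrow> nat) \<Rightarrow> (nat \<times> nat + nat \<times> nat) set" where
  "transport_rows N m mt = (SIGMA t:{..<N}. {..<m}) <+> (SIGMA t:{..<N}. {..<mt t})"

fun transport_matrix :: "nat \<times> nat + nat \<times> nat \<Rightarrow> nat \<times> nat \<times> nat + nat \<Rightarrow> real" where
  "transport_matrix (Inl (t, i)) (Inl (t', i', j)) = (if t' = t \<and> i' = i then 1 else 0)"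
| "transport_matrix (Inl (t, i)) (Inr i') = (if i' = i then -1 else 0)"
| "transport_matrix (Inr (t, j)) (Inl (t', i, j')) = (if t' = t \<and> j' = j then 1 else 0)"
| "transport_matrix (Inr (t, j)) (Inr i) = 0"

fun transport_rhs :: "(nat \<Rightarrow> nat \<Rightarrow> real) \<Rightarrow> nat \<times> nat + nat \<times> nat \<Rightarrow> real" where
  "transport_rhs a (Inl _) = 0"
| "transport_rhs a (Inr (t, j)) = a t j"

fun transport_cost :: "(nat \<Rightarrow> nat \<Rightarrow> nat \<Rightarrow> real) \<Rightarrow> nat \<times> nat \<times> nat + nat \<Rightarrow> real" where
  "transport_cost D (Inl (t, i, j)) = D t i j"
| "transport_cost D (Inr _) = 0"

lemma sum_Sigma3:
  "(\<Sum>(t, i, j)\<in>(SIGMA t:{..<N::nat}. {..<m::nat} \<times> {..<mt t::nat}). f t i j) = (\<Sum>t<N. \<Sum>i<m. \<Sum>j<mt t. f t i j)"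
  by (simp add: sum.Sigma[symmetric] sum.cartesian_product[symmetric])

lemma sum_Sigma2:
  "(\<Sum>(t, j)\<in>(SIGMA t:{..<N::nat}. {..<k t::nat}). f t j) = (\<Sum>t<N. \<Sum>j<k t. f t j)"
  by (simp add: sum.Sigma[symmetric])

lemma sum_transport_cols:
  "(\<Sum>c\<in>transport_cols N m mt. f c) = (\<Sum>t<N. \<Sum>i<m. \<Sum>j<mt t. f (Inl (t, i, j))) + (\<Sum>i<m. f (Inr i))"
  using sum_Sigma3[where f = "\<lambda>t i j. f (Inl (t, i, j))"]
  by (simp add: transport_cols_def sum.Plus o_def)

lemma sum_transport_rows:
  "(\<Sum>r\<in>transport_rows N m mt. f r) = (\<Sum>t<N. \<Sum>i<m. f (Inl (t, i))) + (\<Sum>t<N. \<Sum>j<mt t. f (Inr (t, j)))"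
  using sum_Sigma2[where k = "\<lambda>_. m" and f = "\<lambda>t i. f (Inl (t, i))"]
    sum_Sigma2[where k = mt and f = "\<lambda>t j. f (Inr (t, j))"]
  by (simp add: transport_rows_def sum.Plus o_def)

lemma transport_row_Inl:
  assumes "t < N" "i < m"
  shows "(\<Sum>c\<in>transport_cols N m mt. transport_matrix (Inl (t, i)) c * x c)
    = (\<Sum>j<mt t. x (Inl (t, i, j))) - x (Inr i)"
proof -
  have "(\<Sum>j<mt t'. transport_matrix (Inl (t, i)) (Inl (t', i', j)) * x (Inl (t', i', j)))
      = (if t' = t \<and> i' = i then \<Sum>j<mt t'. x (Inl (t', i', j)) else 0)" for t' i'
    by simp
  then show ?thesis
    using assms by (simp add: sum_transport_cols sum_sum_delta if_distrib[of "\<lambda>k. k * _"] cong: if_cong)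
qed

lemma transport_row_Inr:
  assumes "t < N" "j < mt t"
  shows "(\<Sum>c\<in>transport_cols N m mt. transport_matrix (Inr (t, j)) c * x c) = (\<Sum>i<m. x (Inl (t, i, j)))"
proof -
  have "(\<Sum>i<m. \<Sum>j'<mt t'. transport_matrix (Inr (t, j)) (Inl (t', i, j')) * x (Inl (t', i, j')))
      = (if t' = t then \<Sum>i<m. x (Inl (t, i, j)) else 0)" for t'
    using assms by (simp add: if_distrib[of "\<lambda>k. k * _"] cong: if_cong)
  then show ?thesis
    using assms by (simp add: sum_transport_cols)
qed

lemma transport_col_Inl:
  assumes "t < N" "i < m" "j < mt t"
  shows "(\<Sum>r\<in>transport_rows N m mt. transport_matrix r (Inl (t, i, j)) * y r) = y (Inl (t, i)) + y (Inr (t, j))"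
  using assms by (simp add: sum_transport_rows sum_sum_delta' if_distrib[of "\<lambda>k. k * _"] cong: if_cong)

lemma transport_col_Inr:
  assumes "i < m"
  shows "(\<Sum>r\<in>transport_rows N m mt. transport_matrix r (Inr i) * y r) = - (\<Sum>t<N. y (Inl (t, i)))"
  using assms by (simp add: sum_transport_rows sum_negf if_distrib[of "\<lambda>k. k * _"] cong: if_cong)

lemma transport_primal_feasible:
  assumes "1 \<le> m" "\<forall>t<N. \<forall>j<mt t. 0 \<le> a t j" "\<forall>t<N. (\<Sum>j<mt t. a t j) = 1"
  shows "\<exists>x0. (\<forall>c\<in>transport_cols N m mt. 0 \<le> x0 c) \<and>
    (\<forall>r\<in>transport_rows N m mt. (\<Sum>c\<in>transport_cols N m mt. transport_matrix r c * x0 c) = transport_rhs a r)"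
proof (intro exI conjI)
  define x0 :: "nat \<times> nat \<times> nat + nat \<Rightarrow> real" where
    "x0 = case_sum (\<lambda>(t, i, j). if i = 0 then a t j else 0) (\<lambda>i. if i = 0 then 1 else 0)"
  show "\<forall>c\<in>transport_cols N m mt. 0 \<le> x0 c"
    using assms(2) by (auto simp: transport_cols_def x0_def)
  show "\<forall>r\<in>transport_rows N m mt. (\<Sum>c\<in>transport_cols N m mt. transport_matrix r c * x0 c) = transport_rhs a r"
  proof
    fix r assume "r \<in> transport_rows N m mt"
    then consider t i where "r = Inl (t, i)" "t < N" "i < m" | t j where "r = Inr (t, j)" "t < N" "j < mt t"
      by (auto simp: transport_rows_def)
    then show "(\<Sum>c\<in>transport_cols N m mt. transport_matrix r c * x0 c) = transport_rhs a r"
      by cases (use assms(1,3) in \<open>simp_all add: transport_row_Inl transport_row_Inr x0_def\<close>)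
  qed
qed

lemma transport_dual_feasible:
  "\<exists>y0. \<forall>c\<in>transport_cols N m mt.
     (\<Sum>r\<in>transport_rows N m mt. transport_matrix r c * y0 r) \<le> transport_cost D c"
proof
  define y0 :: "nat \<times> nat + nat \<times> nat \<Rightarrow> real" where
    "y0 = case_sum (\<lambda>_. 0) (\<lambda>(t, j). - (\<Sum>i<m. \<bar>D t i j\<bar>))"
  show "\<forall>c\<in>transport_cols N m mt. (\<Sum>r\<in>transport_rows N m mt. transport_matrix r c * y0 r) \<le> transport_cost D c"
  proof
    fix c assume "c \<in> transport_cols N m mt"
    then consider t i j where "c = Inl (t, i, j)" "t < N" "i < m" "j < mt t" | i where "c = Inr i" "i < m"
      by (auto simp: transport_cols_def)
    then show "(\<Sum>r\<in>transport_rows N m mt. transport_matrix r c * y0 r) \<le> transport_cost D c"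
    proof cases
      case 1
      have "\<bar>D t i j\<bar> \<le> (\<Sum>i'<m. \<bar>D t i' j\<bar>)"
        using 1 by (intro member_le_sum) auto
      then show ?thesis
        using 1 by (simp add: transport_col_Inl y0_def)
    qed (simp add: transport_col_Inr y0_def)
  qed
qed

text \<open>The dual variables y, z of (D) are the negated LP dual variables.\<close>
lemma KKT_D_of_transport_optimum:
  fixes N m :: nat and mt :: "nat \<Rightarrow> nat"
  assumes "1 \<le> N" "\<forall>t<N. (\<Sum>j<mt t. a t j) = 1"
    and x: "\<forall>c\<in>transport_cols N m mt. 0 \<le> x c"
      "\<forall>r\<in>transport_rows N m mt. (\<Sum>c\<in>transport_cols N m mt. transport_matrix r c * x c) = transport_rhs a r"
    and y: "\<forall>c\<in>transport_cols N m mt. (\<Sum>r\<in>transport_rows N m mt. transport_matrix r c * y r) \<le> transport_cost D c"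
    and gap: "(\<Sum>c\<in>transport_cols N m mt. transport_cost D c * x c) \<le> (\<Sum>r\<in>transport_rows N m mt. transport_rhs a r * y r)"
  shows "\<exists>u V y z lam Lam. KKT_D N m mt D a u V y z lam Lam"
proof -
  have x_nonneg: "0 \<le> x (Inl (t, i, j))" if "t < N" "i < m" "j < mt t" for t i j
    using bspec[OF x(1)[unfolded transport_cols_def] InlI[of "(t, i, j)"]] that by simp
  have x_row_sums: "(\<Sum>j<mt t. x (Inl (t, i, j))) = x (Inr i)" if "t < N" "i < m" for t i
    using bspec[OF x(2)[unfolded transport_rows_def] InlI[of "(t, i)"]] that by (simp add: transport_row_Inl)
  have x_col_sums: "(\<Sum>i<m. x (Inl (t, i, j))) = a t j" if "t < N" "j < mt t" for t j
    using bspec[OF x(2)[unfolded transport_rows_def] InrI[of "(t, j)"]] that by (simp add: transport_row_Inr)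
  have y_entries: "y (Inl (t, i)) + y (Inr (t, j)) \<le> D t i j" if "t < N" "i < m" "j < mt t" for t i j
    using bspec[OF y[unfolded transport_cols_def] InlI[of "(t, i, j)"]] that by (simp add: transport_col_Inl)
  have y_sums: "0 \<le> (\<Sum>t<N. y (Inl (t, i)))" if "i < m" for i
    using bspec[OF y[unfolded transport_cols_def] InrI[of i]] that by (simp add: transport_col_Inr)
  define Pi where "Pi t i j = (if i < m \<and> j < mt t then x (Inl (t, i, j)) else 0)" for t i j
  define w where "w i = (if i < m then x (Inr i) else 0)" for i
  define y' where "y' t i = (if i < m then - y (Inl (t, i)) else 0)" for t i
  define z' where "z' t j = (if j < mt t then - y (Inr (t, j)) else 0)" for t j
  have "P_feasible N m mt a w Pi"
    using x_row_sums x_col_sums by (simp add: P_feasible_def w_def Pi_def vecs_def mats_def)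
  moreover have "\<forall>t<N. \<forall>i<m. \<forall>j<mt t. 0 \<le> Pi t i j"
    using x_nonneg by (simp add: Pi_def)
  moreover have "\<forall>t<N. y' t \<in> vecs m \<and> z' t \<in> vecs (mt t)"
    by (simp add: y'_def z'_def vecs_def)
  moreover have "\<forall>t<N. \<forall>i<m. \<forall>j<mt t. 0 \<le> D t i j + y' t i + z' t j"
    using y_entries by (simp add: y'_def z'_def algebra_simps)
  moreover have "\<forall>i<m. (\<Sum>t<N. y' t i) \<le> 0"
    using y_sums by (simp add: y'_def sum_negf)
  moreover have "(\<Sum>t<N. minner m (mt t) (D t) (Pi t)) + 0 + (\<Sum>t<N. vinner (mt t) (z' t) (a t)) \<le> 0"
    using gap by (simp add: sum_transport_cols sum_transport_rows minner_def vinner_def Pi_def z'_def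
        sum_negf mult.commute)
  ultimately have "\<exists>u V. KKT_D N m mt D a u V y' z' w Pi"
    by (rule KKT_D_of_zero_gap[OF assms(1,2)])
  then show ?thesis by blast
qed

lemma exists_KKT_D:
  fixes N m :: nat and mt :: "nat \<Rightarrow> nat"
  assumes "1 \<le> N" "1 \<le> m" "\<forall>t<N. \<forall>j<mt t. 0 \<le> a t j" "\<forall>t<N. (\<Sum>j<mt t. a t j) = 1"
  shows "\<exists>u V y z lam Lam. KKT_D N m mt D a u V y z lam Lam"
proof -
  have fin: "finite (transport_rows N m mt)" "finite (transport_cols N m mt)"
    by (simp_all add: transport_rows_def transport_cols_def)
  obtain x0 where x0: "\<forall>c\<in>transport_cols N m mt. 0 \<le> x0 c"
    "\<forall>r\<in>transport_rows N m mt. (\<Sum>c\<in>transport_cols N m mt. transport_matrix r c * x0 c) = transport_rhs a r"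
    using transport_primal_feasible[OF assms(2-4)] by blast
  obtain y0 where y0: "\<forall>c\<in>transport_cols N m mt.
      (\<Sum>r\<in>transport_rows N m mt. transport_matrix r c * y0 r) \<le> transport_cost D c"
    using transport_dual_feasible by blast
  obtain x y where "\<forall>c\<in>transport_cols N m mt. 0 \<le> x c"
    "\<forall>r\<in>transport_rows N m mt. (\<Sum>c\<in>transport_cols N m mt. transport_matrix r c * x c) = transport_rhs a r"
    "\<forall>c\<in>transport_cols N m mt. (\<Sum>r\<in>transport_rows N m mt. transport_matrix r c * y r) \<le> transport_cost D c"
    "(\<Sum>c\<in>transport_cols N m mt. transport_cost D c * x c) \<le> (\<Sum>r\<in>transport_rows N m mt. transport_rhs a r * y r)"
    by (rule lp_strong_duality[OF fin x0 y0])
  then show ?thesis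
    by (rule KKT_D_of_transport_optimum[OF assms(1,4)])
qed

theorem proposition6:
  fixes N m :: nat and mt :: "nat \<Rightarrow> nat"
    and D :: "nat \<Rightarrow> nat \<Rightarrow> nat \<Rightarrow> real" and a :: "nat \<Rightarrow> nat \<Rightarrow> real"
  assumes "1 \<le> N" and "1 \<le> m" and "\<forall>t<N. 1 \<le> mt t"
    and "\<forall>t<N. \<forall>j<mt t. 0 \<le> a t j"
    and "\<forall>t<N. (\<Sum>j<mt t. a t j) = 1"
  shows "((\<exists>w Pi. P_optimal N m mt D a w Pi) \<and> (\<exists>w Pi y z. KKT_P N m mt D a w Pi y z))
       \<and> ((\<exists>u V y z. D_optimal N m mt D a u V y z) \<and> (\<exists>u V y z lam Lam. KKT_D N m mt D a u V y z lam Lam))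
       \<and> (\<forall>u V y z lam Lam. KKT_D N m mt D a u V y z lam Lam \<longrightarrow>
            D_optimal N m mt D a u V y z \<and> P_optimal N m mt D a lam Lam)"
proof -
  obtain u V y z lam Lam where KKT: "KKT_D N m mt D a u V y z lam Lam"
    using exists_KKT_D[OF assms(1,2,4,5)] by blast
  show ?thesis
  proof (intro conjI allI impI)
    show "\<exists>w Pi. P_optimal N m mt D a w Pi"
      using KKT_D_imp_P_optimal[OF assms(2) KKT] by blast
    show "\<exists>w Pi y z. KKT_P N m mt D a w Pi y z"
      using KKT_D_imp_KKT_P[OF KKT] by blast
    show "\<exists>u V y z. D_optimal N m mt D a u V y z"
      using KKT_D_imp_D_optimal[OF assms(2) KKT] by blast
    show "\<exists>u V y z lam Lam. KKT_D N m mt D a u V y z lam Lam"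
      using KKT by blast
  qed (use KKT_D_imp_D_optimal[OF assms(2)] KKT_D_imp_P_optimal[OF assms(2)] in auto)
qed

end
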